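(* Let $\beta>0$, $T>0$, let $V:\mathbb{R}^d\to\mathbb{R}$ be smooth and $L:=\Delta-\langle\nabla V,\nabla\cdot\rangle$. Let $\Omega\subset\mathbb{R}^d$ be open and let $B_R(x_0)\subset\Omega$. Let $\nu>0$ be smooth and satisfy $\partial_t\nu=\beta\nu L\nu+\|\nabla\nu\|^2$, with $\nu(x,0)\geq c>0$ for all $x\in B_R(x_0)$. Then there exist constants $\epsilon,\tau>0$ depending only on $c,\beta,R,d,x_0,V$ such that \[ \nu(x,t)>\frac{\epsilon(R^2-\|x-x_0\|^2)}{t+\tau}\quad\forall (x,t)\in B_R(x_0)\times[0,T], \] equivalently, with $\nu=(\beta+1)\mu^\beta/\beta$, \[ \mu(x,t)>\Big(\frac{\beta\epsilon(R^2-\|x-x_0\|^2)}{(1+\beta)(t+\tau)}\Big)^{1/\beta}\quad\forall (x,t)\in B_R(x_0)\times[0,T]. \] *)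

theory Defs
  imports "HOL-Analysis.Analysis"
begin

text \<open>Smoothness (C-infinity) on an open set S: all iterated directional
  (Frechet) derivatives exist at every point of S. Since differentiability
  implies continuity, this is exactly the class of C-infinity functions on open S.\<close>
definition smooth_on :: "'a::real_normed_vector set \<Rightarrow> ('a \<Rightarrow> real) \<Rightarrow> bool" where
  "smooth_on S f \<longleftrightarrow>
     (\<forall>vs::'a list. \<forall>x\<in>S.
        (foldr (\<lambda>v g y. frechet_derivative g (at y) v) vs f) differentiable (at x))"

definition pderiv_i :: "(real^'n \<Rightarrow> real) \<Rightarrow> 'n \<Rightarrow> real^'n \<Rightarrow> real" where
  "pderiv_i f i x = frechet_derivative f (at x) (axis i 1)"

definition grad :: "(real^'n \<Rightarrow> real) \<Rightarrow> real^'n \<Rightarrow> real^'n" where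
  "grad f x = (\<chi> i. pderiv_i f i x)"

definition laplacian :: "(real^'n \<Rightarrow> real) \<Rightarrow> real^'n \<Rightarrow> real" where
  "laplacian f x = (\<Sum>i\<in>UNIV. pderiv_i (pderiv_i f i) i x)"

definition Lop :: "(real^'n \<Rightarrow> real) \<Rightarrow> (real^'n \<Rightarrow> real) \<Rightarrow> real^'n \<Rightarrow> real" where
  "Lop V f x = laplacian f x - grad V x \<bullet> grad f x"

end

theory Submission
  imports Defs
begin

(* Comparison with the shrinking paraboloid barrier w(x,t) = a (r^2 - |x - x0|^2) / (t + tau)
  on a closed ball of radius r.  If nu - w first vanishes at (xs, ts) with ts > 0, then xs is
  interior (w = 0 < nu on the sphere), so nu(., ts) - w(., ts) has a spatial minimum at xs:
  grad nu = grad w and Delta nu >= Delta w, whence L nu >= L w >= -2 a (d + M r) / (ts + tau),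
  where M bounds |grad V|.  Dropping the gradient term, the equation gives
  d/dt nu >= -2 beta a (d + M r) w / (ts + tau), which for 2 beta a (d + M r) < 1 exceeds
  d/dt w = -w / (ts + tau).  So nu - w is increasing at ts, although it was positive before.
  tau is chosen so that w < c at t = 0. *)

lemma pderiv_i_has_real_derivative_along_axis:
  fixes \<phi> :: "real^'n \<Rightarrow> real"
  assumes "\<phi> differentiable (at (x + s *\<^sub>R axis i 1))"
  shows "((\<lambda>s. \<phi> (x + s *\<^sub>R axis i 1)) has_real_derivative pderiv_i \<phi> i (x + s *\<^sub>R axis i 1)) (at s)"
proof -
  let ?y = "x + s *\<^sub>R axis i 1"
  let ?D = "frechet_derivative \<phi> (at ?y)"
  have D: "(\<phi> has_derivative ?D) (at ?y)"
    using assms frechet_derivative_works by blast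
  have line: "((\<lambda>s. x + s *\<^sub>R axis i (1::real)) has_derivative (\<lambda>h. h *\<^sub>R axis i 1)) (at s)"
    by (auto intro!: derivative_eq_intros)
  have "(\<lambda>h. ?D (h *\<^sub>R axis i 1)) = (\<lambda>h. pderiv_i \<phi> i ?y * h)"
    using linear_cmul[OF has_derivative_linear[OF D]] by (auto simp: pderiv_i_def)
  then show ?thesis
    using has_derivative_compose[OF line D] unfolding has_field_derivative_def by simp
qed

lemma local_min_second_derivative_nonneg:
  fixes h h' :: "real \<Rightarrow> real"
  assumes "\<delta> > 0" and h': "\<And>s. \<bar>s\<bar> < \<delta> \<Longrightarrow> (h has_real_derivative h' s) (at s)"
    and h'': "(h' has_real_derivative a) (at 0)"
    and min: "\<And>s. \<bar>s\<bar> < \<delta> \<Longrightarrow> h 0 \<le> h s"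
  shows "h' 0 = 0" and "a \<ge> 0"
proof -
  show "h' 0 = 0"
    using DERIV_local_min[OF h'[of 0] \<open>\<delta> > 0\<close>] min \<open>\<delta> > 0\<close> by simp
  show "a \<ge> 0"
  proof (rule ccontr)
    assume "\<not> a \<ge> 0"
    then obtain d where "d > 0" and dec: "\<And>k. k > 0 \<Longrightarrow> k < d \<Longrightarrow> h' k < h' 0"
      using DERIV_neg_dec_right[OF h''] by force
    define s where "s = min d \<delta> / 2"
    have s: "0 < s" "s < d" "s < \<delta>"
      using \<open>d > 0\<close> \<open>\<delta> > 0\<close> by (auto simp: s_def)
    obtain z where "0 < z" "z < s" and mvt: "h s - h 0 = s * h' z"
      using MVT2[of 0 s h h'] s h' by force
    have "h' z < 0"
      using dec[of z] \<open>0 < z\<close> \<open>z < s\<close> s \<open>h' 0 = 0\<close> by simp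
    then have "s * h' z < 0"
      using s(1) by (simp add: mult_pos_neg)
    with mvt have "h s < h 0" by simp
    with min[of s] s show False by simp
  qed
qed

lemma pderiv_i_compare_at_local_min:
  fixes f g :: "real^'n \<Rightarrow> real"
  assumes "open S" and "x \<in> S"
    and f: "\<forall>y\<in>S. f differentiable (at y)" and g: "\<forall>y\<in>S. g differentiable (at y)"
    and f': "pderiv_i f i differentiable (at x)" and g': "pderiv_i g i differentiable (at x)"
    and min: "\<forall>y\<in>S. f x - g x \<le> f y - g y"
  shows "pderiv_i f i x = pderiv_i g i x"
    and "pderiv_i (pderiv_i g i) i x \<le> pderiv_i (pderiv_i f i) i x"
proof -
  obtain \<delta> where "\<delta> > 0" and "ball x \<delta> \<subseteq> S"
    using \<open>open S\<close> \<open>x \<in> S\<close> open_contains_ball by blast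
  let ?e = "axis i (1::real)"
  have line: "x + s *\<^sub>R ?e \<in> S" if "\<bar>s\<bar> < \<delta>" for s
    using that \<open>ball x \<delta> \<subseteq> S\<close> by (auto simp: dist_norm)
  define h where "h s = f (x + s *\<^sub>R ?e) - g (x + s *\<^sub>R ?e)" for s
  define h' where "h' s = pderiv_i f i (x + s *\<^sub>R ?e) - pderiv_i g i (x + s *\<^sub>R ?e)" for s
  have "(h has_real_derivative h' s) (at s)" if "\<bar>s\<bar> < \<delta>" for s
    unfolding h_def h'_def using line[OF that] f g
    by (intro DERIV_diff pderiv_i_has_real_derivative_along_axis) auto
  moreover have "(h' has_real_derivative
      pderiv_i (pderiv_i f i) i x - pderiv_i (pderiv_i g i) i x) (at 0)"
    unfolding h'_def using pderiv_i_has_real_derivative_along_axis[of _ x 0] f' g'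
    by (intro DERIV_diff) auto
  moreover have "h 0 \<le> h s" if "\<bar>s\<bar> < \<delta>" for s
    using min line[OF that] by (simp add: h_def)
  ultimately have "h' 0 = 0"
    and "pderiv_i (pderiv_i f i) i x - pderiv_i (pderiv_i g i) i x \<ge> 0"
    using local_min_second_derivative_nonneg[OF \<open>\<delta> > 0\<close>] by blast+
  then show "pderiv_i f i x = pderiv_i g i x"
    and "pderiv_i (pderiv_i g i) i x \<le> pderiv_i (pderiv_i f i) i x"
    by (simp_all add: h'_def)
qed

lemma Lop_le_at_local_min:
  fixes f g :: "real^'n \<Rightarrow> real"
  assumes "open S" and "x \<in> S"
    and "\<forall>y\<in>S. f differentiable (at y)" and "\<forall>y\<in>S. g differentiable (at y)"
    and "\<forall>i. pderiv_i f i differentiable (at x)" and "\<forall>i. pderiv_i g i differentiable (at x)"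
    and "\<forall>y\<in>S. f x - g x \<le> f y - g y"
  shows "Lop V g x \<le> Lop V f x"
proof -
  note compare = pderiv_i_compare_at_local_min[OF assms(1-4)] assms(5-7)
  have "grad f x = grad g x"
    using compare by (simp add: grad_def vec_eq_iff)
  moreover have "laplacian g x \<le> laplacian f x"
    unfolding laplacian_def using compare by (intro sum_mono) blast
  ultimately show ?thesis
    by (simp add: Lop_def)
qed

lemma paraboloid_has_derivative:
  fixes x0 :: "real^'n"
  shows "((\<lambda>y. k * (r2 - (norm (y - x0))\<^sup>2)) has_derivative (\<lambda>v. -2 * k * ((y - x0) \<bullet> v))) (at y)"
  unfolding power2_norm_eq_inner
  by (auto intro!: derivative_eq_intros simp: algebra_simps inner_commute)

lemma pderiv_i_paraboloid:
  fixes x0 :: "real^'n"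
  shows "pderiv_i (\<lambda>y. k * (r2 - (norm (y - x0))\<^sup>2)) i = (\<lambda>y. -2 * k * (y - x0) $ i)"
  by (rule ext) (simp add: pderiv_i_def frechet_derivative_at[OF paraboloid_has_derivative, symmetric]
      inner_axis)

lemma coordinate_affine_has_derivative:
  fixes x0 :: "real^'n"
  shows "((\<lambda>y. c * (y - x0) $ i) has_derivative (\<lambda>v. c * (v \<bullet> axis i 1))) (at y)"
proof -
  have "(\<lambda>y. c * (y - x0) $ i) = (\<lambda>y. c * ((y - x0) \<bullet> axis i 1))"
    by (simp add: inner_axis)
  then show ?thesis
    by (auto intro!: derivative_eq_intros simp: algebra_simps)
qed

lemma paraboloid_differentiable:
  fixes x0 :: "real^'n"
  shows "(\<lambda>y. k * (r2 - (norm (y - x0))\<^sup>2)) differentiable (at y)"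
    and "pderiv_i (\<lambda>y. k * (r2 - (norm (y - x0))\<^sup>2)) i differentiable (at y)"
  unfolding pderiv_i_paraboloid
  by (blast intro: differentiableI paraboloid_has_derivative coordinate_affine_has_derivative)+

lemma Lop_paraboloid:
  fixes x0 :: "real^'n"
  shows "Lop V (\<lambda>y. k * (r2 - (norm (y - x0))\<^sup>2)) y
    = -2 * k * CARD('n) + 2 * k * (grad V y \<bullet> (y - x0))"
proof -
  have "grad (\<lambda>y. k * (r2 - (norm (y - x0))\<^sup>2)) y = (-2 * k) *\<^sub>R (y - x0)"
    by (simp add: grad_def pderiv_i_paraboloid vec_eq_iff)
  moreover have "pderiv_i (\<lambda>y. -2 * k * (y - x0) $ i) i y = -2 * k" for i
    unfolding pderiv_i_def frechet_derivative_at[OF coordinate_affine_has_derivative, symmetric]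
    by (simp add: inner_axis_axis)
  ultimately show ?thesis
    by (simp add: Lop_def laplacian_def pderiv_i_paraboloid)
qed

lemma Lop_paraboloid_lower_bound:
  fixes x0 :: "real^'n" and M r :: real
  assumes "k \<ge> 0" and "norm (grad V y) \<le> M" and "norm (y - x0) \<le> r"
  shows "-2 * k * (CARD('n) + M * r) \<le> Lop V (\<lambda>y. k * (r2 - (norm (y - x0))\<^sup>2)) y"
proof -
  have "\<bar>grad V y \<bullet> (y - x0)\<bar> \<le> norm (grad V y) * norm (y - x0)"
    by (rule Cauchy_Schwarz_ineq2)
  also have "\<dots> \<le> M * r"
    using assms by (intro mult_mono) (auto intro: order_trans[OF norm_ge_zero])
  finally have "- (M * r) \<le> grad V y \<bullet> (y - x0)"
    by linarith
  then have "2 * k * - (M * r) \<le> 2 * k * (grad V y \<bullet> (y - x0))"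
    using \<open>k \<ge> 0\<close> by (intro mult_left_mono) auto
  then show ?thesis
    unfolding Lop_paraboloid by (simp add: algebra_simps)
qed

lemma smooth_on_imp_differentiable:
  assumes "smooth_on U f" and "p \<in> U"
  shows "f differentiable (at p)"
  using assms unfolding smooth_on_def by (metis foldr.simps(1) id_apply)

lemma smooth_on_imp_frechet_derivative_differentiable:
  assumes "smooth_on U f" and "p \<in> U"
  shows "(\<lambda>q. frechet_derivative f (at q) v) differentiable (at p)"
  using assms unfolding smooth_on_def by (metis foldr.simps(1,2) id_apply o_apply)

lemma has_derivative_space_slice:
  assumes "(f has_derivative D) (at (y, t))"
  shows "((\<lambda>z. f (z, t)) has_derivative (\<lambda>v. D (v, 0))) (at y)"
proof -
  have "((\<lambda>z. (z, t)) has_derivative (\<lambda>v. (v, 0))) (at y)"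
    by (auto intro!: derivative_eq_intros)
  from has_derivative_compose[OF this assms] show ?thesis .
qed

lemma differentiable_space_slice:
  assumes "f differentiable (at (y, t))"
  shows "(\<lambda>z. f (z, t)) differentiable (at y)"
  using assms has_derivative_space_slice unfolding differentiable_def by blast

lemma differentiable_time_slice:
  assumes "f differentiable (at (y, t))"
  shows "(\<lambda>s. f (y, s)) differentiable (at t)"
proof -
  have "(\<lambda>s. (y, s)) differentiable (at t)"
    by (rule differentiableI) (auto intro!: derivative_eq_intros)
  then show ?thesis
    using differentiable_chain_at[of "\<lambda>s. (y, s)" t f] assms by (simp add: o_def)
qed

lemma pderiv_i_space_slice:
  fixes f :: "(real^'n) \<times> real \<Rightarrow> real"
  assumes "f differentiable (at (y, t))"
  shows "pderiv_i (\<lambda>z. f (z, t)) i y = frechet_derivative f (at (y, t)) (axis i 1, 0)"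
  using has_derivative_space_slice[OF assms[unfolded frechet_derivative_works]]
  unfolding pderiv_i_def by (simp add: frechet_derivative_at[symmetric])

lemma smooth_on_pderiv_i_space_slice_differentiable:
  fixes f :: "(real^'n) \<times> real \<Rightarrow> real"
  assumes "smooth_on U f" and "open S" and "x \<in> S" and "S \<times> {t} \<subseteq> U"
  shows "pderiv_i (\<lambda>z. f (z, t)) i differentiable (at x)"
proof -
  let ?Q = "\<lambda>p. frechet_derivative f (at p) (axis i 1, 0)"
  obtain Q' where "(?Q has_derivative Q') (at (x, t))"
    using smooth_on_imp_frechet_derivative_differentiable[OF \<open>smooth_on U f\<close>] assms(3,4)
    unfolding differentiable_def by blast
  then have "((\<lambda>z. ?Q (z, t)) has_derivative (\<lambda>v. Q' (v, 0))) (at x)"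
    by (rule has_derivative_space_slice)
  moreover have "?Q (y, t) = pderiv_i (\<lambda>z. f (z, t)) i y" if "y \<in> S" for y
    using pderiv_i_space_slice[symmetric] smooth_on_imp_differentiable[OF \<open>smooth_on U f\<close>]
      that assms(4) by blast
  ultimately have "(pderiv_i (\<lambda>z. f (z, t)) i has_derivative (\<lambda>v. Q' (v, 0))) (at x)"
    using has_derivative_transform_within_open[OF _ \<open>open S\<close> \<open>x \<in> S\<close>] by blast
  then show ?thesis
    unfolding differentiable_def by blast
qed

lemma nonneg_at_left_limit:
  fixes g :: "real \<Rightarrow> real"
  assumes "isCont g t" and "a < t" and "\<forall>s\<in>{a<..<t}. 0 \<le> g s"
  shows "0 \<le> g t"
proof (rule tendsto_lowerbound)
  show "(g \<longlongrightarrow> g t) (at_left t)"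
    using assms(1) unfolding isCont_def by (rule tendsto_mono[OF at_le, rotated]) simp
  show "\<forall>\<^sub>F s in at_left t. 0 \<le> g s"
    using eventually_at_left_real[OF \<open>a < t\<close>] by eventually_elim (use assms(3) in blast)
qed (rule trivial_limit_at_left_real)

lemma first_zero_in_time:
  fixes f :: "'a::metric_space \<times> real \<Rightarrow> real"
  assumes "compact K" and cont: "\<forall>p\<in>K \<times> {0..T}. isCont f p"
    and "x1 \<in> K" "t1 \<in> {0..T}" "f (x1, t1) \<le> 0"
    and init: "\<forall>x\<in>K. f (x, 0) > 0"
  obtains x t where "x \<in> K" "t \<in> {0<..T}" "f (x, t) = 0"
    "\<forall>y\<in>K. f (y, t) \<ge> 0" "\<forall>y\<in>K. \<forall>s\<in>{0..<t}. f (y, s) > 0"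
proof -
  define Z where "Z = {p \<in> K \<times> {0..T}. f p \<le> 0}"
  have "closed Z"
    unfolding Z_def using cont \<open>compact K\<close>
    by (intro continuous_on_closed_Collect_le continuous_at_imp_continuous_on)
      (auto intro: compact_imp_closed compact_Times)
  moreover have "Z \<subseteq> K \<times> {0..T}"
    by (auto simp: Z_def)
  ultimately have "compact (snd ` Z)"
    using \<open>compact K\<close> by (intro compact_continuous_image continuous_intros)
      (metis compact_Int_closed compact_Icc compact_Times inf.absorb_iff2)
  moreover have "(x1, t1) \<in> Z"
    using assms(3-5) by (simp add: Z_def)
  ultimately obtain t where "t \<in> snd ` Z" and least: "\<And>s. s \<in> snd ` Z \<Longrightarrow> t \<le> s"
    using compact_attains_inf by (metis empty_iff image_eqI snd_conv)
  then obtain x where "(x, t) \<in> Z" by force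
  then have "x \<in> K" "t \<in> {0..T}" "f (x, t) \<le> 0"
    by (auto simp: Z_def)
  then have "t > 0"
    using init by (cases "t = 0") auto
  have before: "\<forall>y\<in>K. \<forall>s\<in>{0..<t}. f (y, s) > 0"
    using least \<open>t \<in> {0..T}\<close> by (force simp: Z_def)
  have nonneg: "f (y, t) \<ge> 0" if "y \<in> K" for y
  proof (rule nonneg_at_left_limit[where g = "\<lambda>s. f (y, s)" and a = 0])
    have "isCont f (y, t)" and "isCont (\<lambda>s. (y, s)) t"
      using cont that \<open>t \<in> {0..T}\<close> by simp_all
    then show "isCont (\<lambda>s. f (y, s)) t"
      using isCont_o2[where f = "\<lambda>s. (y, s)" and a = t and g = f] by simp
    show "\<forall>s\<in>{0<..<t}. 0 \<le> f (y, s)"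
      using before that by (simp add: less_imp_le)
  qed (rule \<open>t > 0\<close>)
  show thesis
  proof (rule that[of x t])
    show "f (x, t) = 0"
      using nonneg[OF \<open>x \<in> K\<close>] \<open>f (x, t) \<le> 0\<close> by simp
  qed (use \<open>x \<in> K\<close> \<open>t > 0\<close> \<open>t \<in> {0..T}\<close> nonneg before in auto)
qed

lemma derivative_nonpos_at_first_nonpos:
  fixes F :: "real \<Rightarrow> real"
  assumes "(F has_real_derivative D) (at t)" and "F t \<le> 0"
    and "a < t" and "\<forall>s\<in>{a..<t}. F s > 0"
  shows "D \<le> 0"
proof (rule ccontr)
  assume "\<not> D \<le> 0"
  then obtain d where "d > 0" and dec: "\<And>h. h > 0 \<Longrightarrow> h < d \<Longrightarrow> F (t - h) < F t"
    using DERIV_pos_inc_left[OF assms(1)] by force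
  define h where "h = min d (t - a) / 2"
  have "0 < h" "h < d" "h \<le> t - a"
    using \<open>a < t\<close> \<open>d > 0\<close> by (simp_all add: h_def)
  then have "F (t - h) < 0" and "t - h \<in> {a..<t}"
    using dec \<open>F t \<le> 0\<close> by force+
  with assms(4) show False
    by fastforce
qed

lemma Lop_lower_bound_at_paraboloid_contact:
  fixes \<phi> :: "real^'n \<Rightarrow> real" and x0 :: "real^'n" and k M r :: real
  assumes "k \<ge> 0" and "x \<in> ball x0 r" and "norm (grad V x) \<le> M"
    and "\<forall>y\<in>ball x0 r. \<phi> differentiable (at y)" and "\<forall>i. pderiv_i \<phi> i differentiable (at x)"
    and "\<forall>y\<in>ball x0 r. \<phi> x - k * (r\<^sup>2 - (norm (x - x0))\<^sup>2) \<le> \<phi> y - k * (r\<^sup>2 - (norm (y - x0))\<^sup>2)"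
  shows "-2 * k * (CARD('n) + M * r) \<le> Lop V \<phi> x"
proof -
  have "norm (x - x0) \<le> r"
    using \<open>x \<in> ball x0 r\<close> by (simp add: dist_norm norm_minus_commute)
  then have "-2 * k * (CARD('n) + M * r) \<le> Lop V (\<lambda>y. k * (r\<^sup>2 - (norm (y - x0))\<^sup>2)) x"
    using Lop_paraboloid_lower_bound assms(1,3) by blast
  also have "\<dots> \<le> Lop V \<phi> x"
    by (rule Lop_le_at_local_min[where S = "ball x0 r"])
      (use assms(2,4-6) paraboloid_differentiable in blast)+
  finally show ?thesis .
qed

lemma first_contact_with_paraboloid_barrier:
  fixes \<nu> :: "(real^'n) \<times> real \<Rightarrow> real" and x0 :: "real^'n" and a c r \<tau> T :: real
  assumes "a > 0" and "\<tau> > 0" and below_init: "a * r\<^sup>2 / \<tau> < c"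
    and cont: "\<forall>p\<in>cball x0 r \<times> {0..T}. isCont \<nu> p"
    and pos: "\<forall>x\<in>cball x0 r. \<forall>t\<in>{0..T}. \<nu> (x, t) > 0"
    and init: "\<forall>x\<in>cball x0 r. \<nu> (x, 0) \<ge> c"
    and crossing: "\<exists>x\<in>cball x0 r. \<exists>t\<in>{0..T}. \<nu> (x, t) \<le> a * (r\<^sup>2 - (norm (x - x0))\<^sup>2) / (t + \<tau>)"
  obtains xs ts where "xs \<in> ball x0 r" and "ts \<in> {0<..T}"
    and "\<nu> (xs, ts) = a * (r\<^sup>2 - (norm (xs - x0))\<^sup>2) / (ts + \<tau>)"
    and "\<forall>y\<in>cball x0 r. a * (r\<^sup>2 - (norm (y - x0))\<^sup>2) / (ts + \<tau>) \<le> \<nu> (y, ts)"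
    and "\<forall>s\<in>{0..<ts}. a * (r\<^sup>2 - (norm (xs - x0))\<^sup>2) / (s + \<tau>) < \<nu> (xs, s)"
proof -
  define f where "f p = \<nu> p - a * (r\<^sup>2 - (norm (fst p - x0))\<^sup>2) / (snd p + \<tau>)" for p
  obtain x1 t1 where "x1 \<in> cball x0 r" "t1 \<in> {0..T}" "f (x1, t1) \<le> 0"
    using crossing by (force simp: f_def)
  moreover have "\<forall>p\<in>cball x0 r \<times> {0..T}. isCont f p"
    using cont \<open>\<tau> > 0\<close> unfolding f_def by (force intro!: continuous_intros)
  moreover have "f (x, 0) > 0" if "x \<in> cball x0 r" for x
  proof -
    have "a * (r\<^sup>2 - (norm (x - x0))\<^sup>2) / \<tau> \<le> a * r\<^sup>2 / \<tau>"
      using \<open>a > 0\<close> \<open>\<tau> > 0\<close> by (simp add: divide_right_mono)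
    moreover have "c \<le> \<nu> (x, 0)"
      using init that by blast
    ultimately show ?thesis
      using below_init by (simp add: f_def)
  qed
  ultimately obtain xs ts where xs: "xs \<in> cball x0 r" "ts \<in> {0<..T}" "f (xs, ts) = 0"
    and "\<forall>y\<in>cball x0 r. f (y, ts) \<ge> 0" and "\<forall>s\<in>{0..<ts}. f (xs, s) > 0"
    using first_zero_in_time[where f = f and T = T, OF compact_cball] by metis
  moreover have "xs \<in> ball x0 r"
  proof (rule ccontr)
    assume "xs \<notin> ball x0 r"
    then have "norm (xs - x0) = r"
      using xs(1) by (simp add: dist_norm norm_minus_commute)
    moreover have "\<nu> (xs, ts) > 0"
      using pos xs(1,2) by auto
    ultimately show False
      using xs(3) by (simp add: f_def)
  qed
  ultimately show thesis
    using that by (simp add: f_def)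
qed

lemma pde_rate_exceeds_barrier_rate:
  fixes \<beta> a P q B L G D :: real
  assumes "\<beta> > 0" and "a > 0" and "P > 0" and "q > 0" and "2 * \<beta> * a * B < 1"
    and "-2 * (a / P) * B \<le> L" and "D = \<beta> * (a / P * q) * L + G" and "G \<ge> 0"
  shows "- (a * q / P\<^sup>2) < D"
proof -
  have "- (2 * \<beta> * a * B) * (a * q / P\<^sup>2) = \<beta> * (a / P * q) * (-2 * (a / P) * B)"
    by (simp add: power2_eq_square)
  also have "\<dots> \<le> \<beta> * (a / P * q) * L"
    using assms by (intro mult_left_mono) auto
  also have "\<dots> \<le> D"
    using assms by simp
  finally have "- (2 * \<beta> * a * B) * (a * q / P\<^sup>2) \<le> D" .
  moreover have "- (a * q / P\<^sup>2) < - (2 * \<beta> * a * B) * (a * q / P\<^sup>2)"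
    using mult_strict_right_mono[OF \<open>2 * \<beta> * a * B < 1\<close>, of "a * q / P\<^sup>2"] assms by simp
  ultimately show ?thesis
    by linarith
qed

lemma deriv_le_barrier_rate_at_first_contact:
  fixes g :: "real \<Rightarrow> real"
  assumes "g differentiable (at t)" and "t > 0" and "t + \<tau> > 0"
    and "g t = b / (t + \<tau>)" and "\<forall>s\<in>{0..<t}. b / (s + \<tau>) < g s"
  shows "deriv g t \<le> - (b / (t + \<tau>)\<^sup>2)"
proof -
  have "(g has_real_derivative deriv g t) (at t)"
    using assms(1) DERIV_deriv_iff_real_differentiable by blast
  moreover have "((\<lambda>s. b / (s + \<tau>)) has_real_derivative - (b / (t + \<tau>)\<^sup>2)) (at t)"
    using \<open>t + \<tau> > 0\<close> by (auto intro!: derivative_eq_intros simp: power2_eq_square)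
  ultimately have "((\<lambda>s. g s - b / (s + \<tau>)) has_real_derivative deriv g t + b / (t + \<tau>)\<^sup>2) (at t)"
    by (auto dest: DERIV_diff)
  from derivative_nonpos_at_first_nonpos[OF this _ \<open>t > 0\<close>] assms(4,5) show ?thesis
    by simp
qed

lemma solution_above_paraboloid_barrier:
  fixes \<nu> :: "(real^'n) \<times> real \<Rightarrow> real" and x0 :: "real^'n" and a c r \<tau> M T :: real
  assumes "\<beta> > 0" and "a > 0" and "\<tau> > 0"
    and M: "\<forall>y\<in>cball x0 r. norm (grad V y) \<le> M"
    and small: "2 * \<beta> * a * (CARD('n) + M * r) < 1"
    and below_init: "a * r\<^sup>2 / \<tau> < c"
    and "open U" and U: "cball x0 r \<times> {0..T} \<subseteq> U" and smooth: "smooth_on U \<nu>"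
    and pos: "\<forall>x\<in>cball x0 r. \<forall>t\<in>{0..T}. \<nu> (x, t) > 0"
    and pde: "\<forall>x\<in>ball x0 r. \<forall>t\<in>{0..T}.
        deriv (\<lambda>s. \<nu> (x, s)) t =
          \<beta> * \<nu> (x, t) * Lop V (\<lambda>y. \<nu> (y, t)) x + (norm (grad (\<lambda>y. \<nu> (y, t)) x))\<^sup>2"
    and init: "\<forall>x\<in>cball x0 r. \<nu> (x, 0) \<ge> c"
  shows "\<forall>x\<in>cball x0 r. \<forall>t\<in>{0..T}. \<nu> (x, t) > a * (r\<^sup>2 - (norm (x - x0))\<^sup>2) / (t + \<tau>)"
proof (rule ccontr)
  have diff: "\<nu> differentiable (at (y, t))" if "y \<in> cball x0 r" "t \<in> {0..T}" for y t
    using smooth_on_imp_differentiable[OF smooth] U that by blast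
  assume "\<not> ?thesis"
  then have "\<exists>x\<in>cball x0 r. \<exists>t\<in>{0..T}. \<nu> (x, t) \<le> a * (r\<^sup>2 - (norm (x - x0))\<^sup>2) / (t + \<tau>)"
    by (auto simp: not_less)
  moreover have "\<forall>p\<in>cball x0 r \<times> {0..T}. isCont \<nu> p"
    using diff differentiable_imp_continuous_within by fastforce
  ultimately obtain xs ts where "xs \<in> ball x0 r" and "ts \<in> {0<..T}"
    and touch: "\<nu> (xs, ts) = a * (r\<^sup>2 - (norm (xs - x0))\<^sup>2) / (ts + \<tau>)"
    and below: "\<forall>y\<in>cball x0 r. a * (r\<^sup>2 - (norm (y - x0))\<^sup>2) / (ts + \<tau>) \<le> \<nu> (y, ts)"
    and before: "\<forall>s\<in>{0..<ts}. a * (r\<^sup>2 - (norm (xs - x0))\<^sup>2) / (s + \<tau>) < \<nu> (xs, s)"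
    using first_contact_with_paraboloid_barrier[OF \<open>a > 0\<close> \<open>\<tau> > 0\<close> below_init _ pos init] by blast
  define q where "q = r\<^sup>2 - (norm (xs - x0))\<^sup>2"
  have ts: "ts \<in> {0..T}" "ts > 0" "ts + \<tau> > 0"
    using \<open>ts \<in> {0<..T}\<close> \<open>\<tau> > 0\<close> by auto
  have "q > 0"
    using \<open>xs \<in> ball x0 r\<close> by (simp add: q_def dist_norm norm_minus_commute abs_less_iff power_strict_mono)
  have "-2 * (a / (ts + \<tau>)) * (CARD('n) + M * r) \<le> Lop V (\<lambda>y. \<nu> (y, ts)) xs"
  proof (rule Lop_lower_bound_at_paraboloid_contact)
    show "\<forall>y\<in>ball x0 r. (\<lambda>y. \<nu> (y, ts)) differentiable (at y)"
      using diff ts by (auto intro: differentiable_space_slice)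
    have "ball x0 r \<times> {ts} \<subseteq> U"
      using U ts by auto
    then show "\<forall>i. pderiv_i (\<lambda>y. \<nu> (y, ts)) i differentiable (at xs)"
      using smooth_on_pderiv_i_space_slice_differentiable[OF smooth open_ball \<open>xs \<in> ball x0 r\<close>]
      by blast
    show "\<forall>y\<in>ball x0 r. \<nu> (xs, ts) - a / (ts + \<tau>) * (r\<^sup>2 - (norm (xs - x0))\<^sup>2)
        \<le> \<nu> (y, ts) - a / (ts + \<tau>) * (r\<^sup>2 - (norm (y - x0))\<^sup>2)"
      using touch below by auto
  qed (use \<open>a > 0\<close> ts \<open>xs \<in> ball x0 r\<close> M in auto)
  then have "- (a * q / (ts + \<tau>)\<^sup>2) < deriv (\<lambda>s. \<nu> (xs, s)) ts"
    using pde_rate_exceeds_barrier_rate[OF \<open>\<beta> > 0\<close> \<open>a > 0\<close> \<open>ts + \<tau> > 0\<close> \<open>q > 0\<close> small]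
      pde \<open>xs \<in> ball x0 r\<close> ts(1) touch by (simp add: q_def)
  moreover have "deriv (\<lambda>s. \<nu> (xs, s)) ts \<le> - (a * q / (ts + \<tau>)\<^sup>2)"
    using differentiable_time_slice[OF diff[OF _ ts(1)]] \<open>xs \<in> ball x0 r\<close> touch before ts
    by (intro deriv_le_barrier_rate_at_first_contact) (auto simp: q_def)
  ultimately show False
    by simp
qed

lemma smooth_on_UNIV_grad_bounded:
  assumes "smooth_on UNIV V" and "compact K"
  obtains M where "M > 0" and "\<forall>y\<in>K. norm (grad V y) \<le> M"
proof -
  have "continuous_on UNIV (pderiv_i V i)" for i
    unfolding pderiv_i_def
    using smooth_on_imp_frechet_derivative_differentiable[OF assms(1)]
    by (blast intro: continuous_at_imp_continuous_on differentiable_imp_continuous_within)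
  then have "continuous_on K (grad V)"
    unfolding grad_def[abs_def] by (rule continuous_on_subset[OF continuous_on_vec_lambda]) auto
  then have "bounded (grad V ` K)"
    using \<open>compact K\<close> by (intro compact_imp_bounded compact_continuous_image)
  then show thesis
    using that by (auto simp: bounded_pos)
qed

lemma radius_halving_gap:
  fixes \<rho> R :: real
  assumes "0 \<le> \<rho>" and "\<rho> < R"
  obtains r where "\<rho> < r" and "r < R" and "2 * (r\<^sup>2 - \<rho>\<^sup>2) = R\<^sup>2 - \<rho>\<^sup>2"
proof
  define r where "r = sqrt ((R\<^sup>2 + \<rho>\<^sup>2) / 2)"
  have "\<rho>\<^sup>2 < R\<^sup>2"
    using assms by (simp add: power_strict_mono)
  moreover have r2: "r\<^sup>2 = (R\<^sup>2 + \<rho>\<^sup>2) / 2"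
    by (simp add: r_def)
  ultimately have "\<rho>\<^sup>2 < r\<^sup>2" and "r\<^sup>2 < R\<^sup>2"
    by simp_all
  moreover have "0 \<le> r"
    by (simp add: r_def)
  ultimately show "\<rho> < r" and "r < R"
    using assms by (auto intro: power_less_imp_less_base)
  show "2 * (r\<^sup>2 - \<rho>\<^sup>2) = R\<^sup>2 - \<rho>\<^sup>2"
    by (simp add: r2)
qed

lemma solution_above_paraboloid_in_ball:
  fixes \<nu> :: "(real^'n) \<times> real \<Rightarrow> real" and x0 :: "real^'n" and \<epsilon> c R \<tau> M T :: real
  assumes "\<beta> > 0" and "\<epsilon> > 0" and "\<tau> > 0" and "M \<ge> 0"
    and M: "\<forall>y\<in>cball x0 R. norm (grad V y) \<le> M"
    and small: "8 * \<beta> * \<epsilon> * (CARD('n) + M * R) \<le> 1"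
    and below_init: "2 * \<epsilon> * R\<^sup>2 / \<tau> < c"
    and "open U" and U: "ball x0 R \<times> {0..T} \<subseteq> U" and "smooth_on U \<nu>"
    and pos: "\<forall>x\<in>ball x0 R. \<forall>t\<in>{0..T}. \<nu> (x, t) > 0"
    and pde: "\<forall>x\<in>ball x0 R. \<forall>t\<in>{0..T}.
        deriv (\<lambda>s. \<nu> (x, s)) t =
          \<beta> * \<nu> (x, t) * Lop V (\<lambda>y. \<nu> (y, t)) x + (norm (grad (\<lambda>y. \<nu> (y, t)) x))\<^sup>2"
    and init: "\<forall>x\<in>ball x0 R. \<nu> (x, 0) \<ge> c"
    and "x \<in> ball x0 R" and "t \<in> {0..T}"
  shows "\<nu> (x, t) > \<epsilon> * (R\<^sup>2 - (norm (x - x0))\<^sup>2) / (t + \<tau>)"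
proof -
  (* The comparison needs a closed ball on which nu is smooth.  Shrinking to a radius r with
    2 (r^2 - |x - x0|^2) = R^2 - |x - x0|^2 is paid for by the factor 2 in the barrier. *)
  obtain r where "norm (x - x0) < r" "r < R"
    and gap: "2 * (r\<^sup>2 - (norm (x - x0))\<^sup>2) = R\<^sup>2 - (norm (x - x0))\<^sup>2"
    using radius_halving_gap[of "norm (x - x0)" R] \<open>x \<in> ball x0 R\<close>
    by (auto simp: dist_norm norm_minus_commute)
  then have "x \<in> cball x0 r" and r: "cball x0 r \<subseteq> ball x0 R"
    by (auto simp: dist_norm norm_minus_commute)
  have "0 \<le> r"
    using \<open>norm (x - x0) < r\<close> norm_ge_zero[of "x - x0"] by linarith
  have "\<forall>y\<in>cball x0 r. \<forall>s\<in>{0..T}. \<nu> (y, s) > 2 * \<epsilon> * (r\<^sup>2 - (norm (y - x0))\<^sup>2) / (s + \<tau>)"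
  proof (rule solution_above_paraboloid_barrier)
    have "2 * \<beta> * (2 * \<epsilon>) * (CARD('n) + M * r) \<le> 8 * \<beta> * \<epsilon> * (CARD('n) + M * R) / 2"
      using \<open>r < R\<close> \<open>M \<ge> 0\<close> \<open>\<beta> > 0\<close> \<open>\<epsilon> > 0\<close> by (simp add: mult_left_mono)
    then show "2 * \<beta> * (2 * \<epsilon>) * (CARD('n) + M * r) < 1"
      using small by linarith
    have "2 * \<epsilon> * r\<^sup>2 / \<tau> \<le> 2 * \<epsilon> * R\<^sup>2 / \<tau>"
      using \<open>0 \<le> r\<close> \<open>r < R\<close> \<open>\<epsilon> > 0\<close> \<open>\<tau> > 0\<close> by (simp add: divide_right_mono power_mono)
    then show "2 * \<epsilon> * r\<^sup>2 / \<tau> < c"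
      using below_init by linarith
    show "cball x0 r \<times> {0..T} \<subseteq> U"
      using r U by blast
  qed (use assms r ball_subset_cball in \<open>auto simp: subset_iff\<close>)
  then have "\<nu> (x, t) > 2 * \<epsilon> * (r\<^sup>2 - (norm (x - x0))\<^sup>2) / (t + \<tau>)"
    using \<open>x \<in> cball x0 r\<close> \<open>t \<in> {0..T}\<close> by blast
  then show ?thesis
    unfolding gap[symmetric] by (simp add: ac_simps)
qed

theorem lemma2:
  fixes \<beta> c R :: real and x0 :: "real^'n" and V :: "real^'n \<Rightarrow> real"
  assumes "\<beta> > 0" and "c > 0" and "R > 0" and "smooth_on UNIV V"
  shows "\<exists>\<epsilon>>0. \<exists>\<tau>>0. \<forall>(T::real) (\<Omega>::(real^'n) set) (U::((real^'n) \<times> real) set)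
           (\<nu>::(real^'n) \<times> real \<Rightarrow> real).
     T > 0 \<longrightarrow> open \<Omega> \<longrightarrow> ball x0 R \<subseteq> \<Omega> \<longrightarrow>
     open U \<longrightarrow> \<Omega> \<times> {0..T} \<subseteq> U \<longrightarrow> smooth_on U \<nu> \<longrightarrow>
     (\<forall>x\<in>\<Omega>. \<forall>t\<in>{0..T}. \<nu> (x, t) > 0) \<longrightarrow>
     (\<forall>x\<in>\<Omega>. \<forall>t\<in>{0..T}.
        deriv (\<lambda>s. \<nu> (x, s)) t =
          \<beta> * \<nu> (x, t) * Lop V (\<lambda>y. \<nu> (y, t)) x + (norm (grad (\<lambda>y. \<nu> (y, t)) x))\<^sup>2) \<longrightarrow>
     (\<forall>x\<in>ball x0 R. \<nu> (x, 0) \<ge> c) \<longrightarrow>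
     (\<forall>x\<in>ball x0 R. \<forall>t\<in>{0..T}.
        \<nu> (x, t) > \<epsilon> * (R\<^sup>2 - (norm (x - x0))\<^sup>2) / (t + \<tau>))"
proof -
  obtain M where "M > 0" and M: "\<forall>y\<in>cball x0 R. norm (grad V y) \<le> M"
    using smooth_on_UNIV_grad_bounded[OF assms(4) compact_cball] by blast
  have "CARD('n) + M * R > 0"
    using \<open>M > 0\<close> \<open>R > 0\<close> by (simp add: add_pos_pos)
  define \<epsilon> where "\<epsilon> = 1 / (8 * \<beta> * (CARD('n) + M * R))"
  define \<tau> where "\<tau> = 4 * \<epsilon> * R\<^sup>2 / c"
  have "\<epsilon> > 0" and "\<tau> > 0"
    using assms \<open>CARD('n) + M * R > 0\<close> by (simp_all add: \<epsilon>_def \<tau>_def)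
  have small: "8 * \<beta> * \<epsilon> * (CARD('n) + M * R) \<le> 1"
    using \<open>\<beta> > 0\<close> \<open>CARD('n) + M * R > 0\<close> by (simp add: \<epsilon>_def)
  have below_init: "2 * \<epsilon> * R\<^sup>2 / \<tau> < c"
    using \<open>\<epsilon> > 0\<close> \<open>c > 0\<close> \<open>R > 0\<close> by (simp add: \<tau>_def)
  show ?thesis
  proof (intro exI conjI allI impI ballI)
    show "\<epsilon> > 0" and "\<tau> > 0"
      by fact+
  next
    fix T \<Omega> U \<nu> x t
    assume \<Omega>: "ball x0 R \<subseteq> \<Omega>" and "open U" and U: "\<Omega> \<times> {0..T} \<subseteq> U" and "smooth_on U \<nu>"
      and pos: "\<forall>x\<in>\<Omega>. \<forall>t\<in>{0..T}. \<nu> (x, t) > 0"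
      and pde: "\<forall>x\<in>\<Omega>. \<forall>t\<in>{0..T}. deriv (\<lambda>s. \<nu> (x, s)) t =
          \<beta> * \<nu> (x, t) * Lop V (\<lambda>y. \<nu> (y, t)) x + (norm (grad (\<lambda>y. \<nu> (y, t)) x))\<^sup>2"
      and init: "\<forall>x\<in>ball x0 R. \<nu> (x, 0) \<ge> c" and "x \<in> ball x0 R" and "t \<in> {0..T}"
    show "\<nu> (x, t) > \<epsilon> * (R\<^sup>2 - (norm (x - x0))\<^sup>2) / (t + \<tau>)"
      by (rule solution_above_paraboloid_in_ball[OF \<open>\<beta> > 0\<close> \<open>\<epsilon> > 0\<close> \<open>\<tau> > 0\<close> _ M small below_init
            \<open>open U\<close> _ \<open>smooth_on U \<nu>\<close> _ _ init \<open>x \<in> ball x0 R\<close> \<open>t \<in> {0..T}\<close>])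
        (use \<open>M > 0\<close> \<Omega> U pos pde in auto)
  qed
qed

end
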